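(* Let $p\in(0,1)$, $\beta\in(0,\infty)$, and $f(x)=-\ln[p+(1-p)e^{-x}]$. Set $$A:=2f(\beta)-f(2\beta),\qquad B:=f(\beta)+f(2\beta)-f(3\beta).$$ Let $n,k$ be integers with $c:=k\ln(1/p)/\ln n\le 2$. Let $q,q'$ be integers with $0\le q,q'\le k$. Let $g_1,\dots,g_9\ge0$ be integers satisfying $$g_1+g_2+g_3\le k-q,\quad g_4+g_5+g_6\le q,\quad g_7+g_8+g_9\le k-q,$$ $$g_1+g_4+g_7\le k-q',\quad g_2+g_5+g_8\le q',\quad g_3+g_6+g_9\le k-q',$$ and put $g=g_1+\dots+g_9$. Define $$C_1=A(g_5+g_6+g_8+g_9),\quad C_3=A(g_4+g_5+g_7+g_8),$$ $$C_7=A(g_2+g_3+g_5+g_6),\quad C_9=A(g_1+g_2+g_4+g_5),$$ $$C_2=A(g_4+g_6+g_7+g_9)+B(g_5+g_8),\quad C_4=A(g_2+g_3+g_8+g_9)+B(g_5+g_6),$$ $$C_6=A(g_1+g_2+g_7+g_8)+B(g_4+g_5),\quad C_8=A(g_1+g_3+g_4+g_6)+B(g_2+g_5),$$ $$C_5=A(g_1+g_3+g_7+g_9)+B(g_2+g_4+g_6+g_8),$$ and $$\Psi=\frac{g_5(g_5-1)}{2}\big(2f(2\beta)-f(4\beta)\big)+\frac12\sum_{r=1}^9 g_rC_r.$$ Then $\Psi\le\bar\Psi(q,q',g,g_5)$, where $$\bar\Psi=\frac{g_5(g_5-1)}{2}\big(2f(2\beta)-f(4\beta)\big)+\frac12\big(f(\beta)+f(2\beta)-f(3\beta)\big)\big((k\wedge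 g)+g_5\big)(g-g_5).$$
   Context: $k\wedge g$ denotes $\min(k,g)$. *)

theory Defs
  imports Complex_Main
begin

definition fcn :: "real \<Rightarrow> real \<Rightarrow> real" where
  "fcn p x = - ln (p + (1 - p) * exp (- x))"

end

theory Submission
  imports Defs
begin

text \<open>Writing \<open>h u = p + (1 - p) u\<close>, we have \<open>f x = - ln (h (exp (- x)))\<close>, and the two
  product identities \<open>h (s t) - h s h t = p (1 - p) (1 - s) (1 - t)\<close> and
  \<open>h u\<^sup>2 h v\<^sup>2 - h (u v)\<^sup>2 = p (1 - p) (u - v)\<^sup>2\<close> show that \<open>f\<close> is subadditive on \<open>[0, \<infinity>)\<close>
  and midpoint concave. Hence \<open>0 \<le> B\<close> and \<open>A \<le> B\<close>, so \<open>\<Sum> g\<^sub>r C\<^sub>r = A X + B Y \<le> B (X + Y)\<close>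
  with \<open>X, Y \<ge> 0\<close>. In \<open>X + Y\<close> the cell \<open>g\<^sub>5\<close> is paired with all \<open>g - g\<^sub>5\<close> other cells, and every
  other cell with cells lying in two adjacent rows or two adjacent columns of the \<open>3 \<times> 3\<close> grid,
  whose total weight is at most \<open>(k - q) + q = k\<close> (resp. \<open>(k - q') + q'\<close>) and at most \<open>g\<close>.\<close>

lemma fcn_add_le:
  assumes "0 < p" "p < 1" "0 \<le> x" "0 \<le> y"
  shows "fcn p (x + y) \<le> fcn p x + fcn p y"
proof -
  define h where "h w = p + (1 - p) * w" for w
  define s t where "s = exp (- x)" and "t = exp (- y)"
  have s: "0 < s" "s \<le> 1" and t: "0 < t" "t \<le> 1"
    using assms by (auto simp: s_def t_def)
  have pos: "0 < h w" if "0 < w" for w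
    using assms that by (simp add: h_def add_pos_nonneg)
  have "h s * h t - h (s * t) = - (p * (1 - p) * ((1 - s) * (1 - t)))"
    by (simp add: h_def algebra_simps)
  also have "\<dots> \<le> 0"
    using assms s t by simp
  finally have "ln (h s * h t) \<le> ln (h (s * t))"
    by (simp add: ln_mono mult_pos_pos pos s(1) t(1))
  then have "ln (h s) + ln (h t) \<le> ln (h (s * t))"
    by (simp add: ln_mult_pos pos s(1) t(1))
  moreover have "exp (- (x + y)) = s * t"
    by (simp add: s_def t_def flip: exp_add)
  ultimately show ?thesis
    by (simp add: fcn_def h_def s_def t_def)
qed

lemma fcn_midpoint_concave:
  assumes "0 < p" "p < 1"
  shows "fcn p x + fcn p y \<le> 2 * fcn p ((x + y) / 2)"
proof -
  define h where "h w = p + (1 - p) * w" for w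
  define u v where "u = exp (- x / 2)" and "v = exp (- y / 2)"
  have u: "0 < u" and v: "0 < v"
    by (simp_all add: u_def v_def)
  have pos: "0 < h w" if "0 < w" for w
    using assms that by (simp add: h_def add_pos_nonneg)
  have "(h (u * v))\<^sup>2 - h (u\<^sup>2) * h (v\<^sup>2) = - (p * (1 - p) * (u - v)\<^sup>2)"
    by (simp add: h_def algebra_simps power2_eq_square)
  also have "\<dots> \<le> 0"
    using assms by simp
  finally have "ln ((h (u * v))\<^sup>2) \<le> ln (h (u\<^sup>2) * h (v\<^sup>2))"
    using pos[OF mult_pos_pos[OF u v]] by (simp add: ln_mono)
  then have "2 * ln (h (u * v)) \<le> ln (h (u\<^sup>2)) + ln (h (v\<^sup>2))"
    using ln_mult_pos[OF pos pos, of "u\<^sup>2" "v\<^sup>2"] u v by (simp add: ln_realpow)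
  moreover have "exp (- x) = u\<^sup>2" "exp (- y) = v\<^sup>2" "exp (- ((x + y) / 2)) = u * v"
    by (simp_all add: u_def v_def power2_eq_square add_divide_distrib flip: exp_add)
  ultimately show ?thesis
    by (simp add: fcn_def h_def)
qed

lemma grid_quadratic_form_le:
  fixes A B m g1 g2 g3 g4 g5 g6 g7 g8 g9 :: "'a::linordered_idom"
  assumes nonneg: "0 \<le> g1" "0 \<le> g2" "0 \<le> g3" "0 \<le> g4" "0 \<le> g5" "0 \<le> g6" "0 \<le> g7" "0 \<le> g8" "0 \<le> g9"
    and AB: "A \<le> B" and B: "0 \<le> B"
    and d1: "g5 + g6 + g8 + g9 \<le> m"
    and d2: "g4 + g5 + g6 + g7 + g8 + g9 \<le> m"
    and d3: "g4 + g5 + g7 + g8 \<le> m"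
    and d4: "g2 + g3 + g5 + g6 + g8 + g9 \<le> m"
    and d6: "g1 + g2 + g4 + g5 + g7 + g8 \<le> m"
    and d7: "g2 + g3 + g5 + g6 \<le> m"
    and d8: "g1 + g2 + g3 + g4 + g5 + g6 \<le> m"
    and d9: "g1 + g2 + g4 + g5 \<le> m"
  shows "g1 * (A * (g5 + g6 + g8 + g9))
       + g2 * (A * (g4 + g6 + g7 + g9) + B * (g5 + g8))
       + g3 * (A * (g4 + g5 + g7 + g8))
       + g4 * (A * (g2 + g3 + g8 + g9) + B * (g5 + g6))
       + g5 * (A * (g1 + g3 + g7 + g9) + B * (g2 + g4 + g6 + g8))
       + g6 * (A * (g1 + g2 + g7 + g8) + B * (g4 + g5))
       + g7 * (A * (g2 + g3 + g5 + g6))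
       + g8 * (A * (g1 + g3 + g4 + g6) + B * (g2 + g5))
       + g9 * (A * (g1 + g2 + g4 + g5))
       \<le> B * (m + g5) * ((g1 + g2 + g3 + g4 + g5 + g6 + g7 + g8 + g9) - g5)"
proof -
  define S where "S = g1 + g2 + g3 + g4 + g6 + g7 + g8 + g9"
  define X where "X = g1 * (g5 + g6 + g8 + g9) + g2 * (g4 + g6 + g7 + g9)
       + g3 * (g4 + g5 + g7 + g8) + g4 * (g2 + g3 + g8 + g9) + g5 * (g1 + g3 + g7 + g9)
       + g6 * (g1 + g2 + g7 + g8) + g7 * (g2 + g3 + g5 + g6)
       + g8 * (g1 + g3 + g4 + g6) + g9 * (g1 + g2 + g4 + g5)"
  define Y where "Y = g2 * (g5 + g8) + g4 * (g5 + g6) + g5 * (g2 + g4 + g6 + g8)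
       + g6 * (g4 + g5) + g8 * (g2 + g5)"
  define D where "D = g1 * (g5 + g6 + g8 + g9) + g2 * (g4 + g5 + g6 + g7 + g8 + g9)
       + g3 * (g4 + g5 + g7 + g8) + g4 * (g2 + g3 + g5 + g6 + g8 + g9)
       + g6 * (g1 + g2 + g4 + g5 + g7 + g8) + g7 * (g2 + g3 + g5 + g6)
       + g8 * (g1 + g2 + g3 + g4 + g5 + g6) + g9 * (g1 + g2 + g4 + g5)"
  have "0 \<le> X"
    using nonneg by (simp add: X_def)
  have "D \<le> S * m"
    unfolding D_def S_def distrib_right
    by (intro add_mono mult_left_mono d1 d2 d3 d4 d6 d7 d8 d9 nonneg)
  have "g1 * (A * (g5 + g6 + g8 + g9))
       + g2 * (A * (g4 + g6 + g7 + g9) + B * (g5 + g8))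
       + g3 * (A * (g4 + g5 + g7 + g8))
       + g4 * (A * (g2 + g3 + g8 + g9) + B * (g5 + g6))
       + g5 * (A * (g1 + g3 + g7 + g9) + B * (g2 + g4 + g6 + g8))
       + g6 * (A * (g1 + g2 + g7 + g8) + B * (g4 + g5))
       + g7 * (A * (g2 + g3 + g5 + g6))
       + g8 * (A * (g1 + g3 + g4 + g6) + B * (g2 + g5))
       + g9 * (A * (g1 + g2 + g4 + g5)) = A * X + B * Y"
    by (simp add: X_def Y_def algebra_simps)
  also have "\<dots> \<le> B * (X + Y)"
    using mult_right_mono[OF AB \<open>0 \<le> X\<close>] by (simp add: distrib_left)
  also have "X + Y = g5 * S + D"
    by (simp add: X_def Y_def D_def S_def algebra_simps)
  also have "B * (g5 * S + D) \<le> B * (g5 * S + S * m)"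
    using \<open>D \<le> S * m\<close> B by (simp add: mult_left_mono)
  also have "\<dots> = B * (m + g5) * ((g1 + g2 + g3 + g4 + g5 + g6 + g7 + g8 + g9) - g5)"
    by (simp add: S_def algebra_simps)
  finally show ?thesis .
qed

theorem lemma3p1:
  fixes p \<beta> :: real and n :: int and k q q' :: nat
    and g1 g2 g3 g4 g5 g6 g7 g8 g9 :: nat
  assumes hp: "0 < p" "p < 1" and hb: "0 < \<beta>"
    and hc: "real k * ln (1 / p) / ln (real_of_int n) \<le> 2"
    and hq: "q \<le> k" "q' \<le> k"
    and r1: "g1 + g2 + g3 \<le> k - q" and r2: "g4 + g5 + g6 \<le> q" and r3: "g7 + g8 + g9 \<le> k - q"
    and c1: "g1 + g4 + g7 \<le> k - q'" and c2: "g2 + g5 + g8 \<le> q'" and c3: "g3 + g6 + g9 \<le> k - q'"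
  shows
    "let f = fcn p;
         A = 2 * f \<beta> - f (2 * \<beta>);
         B = f \<beta> + f (2 * \<beta>) - f (3 * \<beta>);
         g = g1 + g2 + g3 + g4 + g5 + g6 + g7 + g8 + g9;
         C1 = A * real (g5 + g6 + g8 + g9);
         C3 = A * real (g4 + g5 + g7 + g8);
         C7 = A * real (g2 + g3 + g5 + g6);
         C9 = A * real (g1 + g2 + g4 + g5);
         C2 = A * real (g4 + g6 + g7 + g9) + B * real (g5 + g8);
         C4 = A * real (g2 + g3 + g8 + g9) + B * real (g5 + g6);
         C6 = A * real (g1 + g2 + g7 + g8) + B * real (g4 + g5);
         C8 = A * real (g1 + g3 + g4 + g6) + B * real (g2 + g5);
         C5 = A * real (g1 + g3 + g7 + g9) + B * real (g2 + g4 + g6 + g8);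
         \<Psi> = real g5 * (real g5 - 1) / 2 * (2 * f (2 * \<beta>) - f (4 * \<beta>))
             + 1/2 * (real g1 * C1 + real g2 * C2 + real g3 * C3 + real g4 * C4 + real g5 * C5
                      + real g6 * C6 + real g7 * C7 + real g8 * C8 + real g9 * C9);
         \<Psi>bar = real g5 * (real g5 - 1) / 2 * (2 * f (2 * \<beta>) - f (4 * \<beta>))
             + 1/2 * (f \<beta> + f (2 * \<beta>) - f (3 * \<beta>)) * (real (min k g) + real g5) * (real g - real g5)
     in \<Psi> \<le> \<Psi>bar"
proof -
  define g where "g = g1 + g2 + g3 + g4 + g5 + g6 + g7 + g8 + g9"
  have "fcn p \<beta> + fcn p (3 * \<beta>) \<le> 2 * fcn p (2 * \<beta>)"
    using fcn_midpoint_concave[OF hp, of \<beta> "3 * \<beta>"] by simp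
  moreover have "fcn p (3 * \<beta>) \<le> fcn p \<beta> + fcn p (2 * \<beta>)"
    using fcn_add_le[OF hp, of \<beta> "2 * \<beta>"] hb by simp
  ultimately have "2 * fcn p \<beta> - fcn p (2 * \<beta>) \<le> fcn p \<beta> + fcn p (2 * \<beta>) - fcn p (3 * \<beta>)"
    and "0 \<le> fcn p \<beta> + fcn p (2 * \<beta>) - fcn p (3 * \<beta>)"
    by linarith+
  note grid = grid_quadratic_form_le[OF of_nat_0_le_iff of_nat_0_le_iff of_nat_0_le_iff
      of_nat_0_le_iff of_nat_0_le_iff of_nat_0_le_iff of_nat_0_le_iff of_nat_0_le_iff
      of_nat_0_le_iff this, where m = "real (min k g)"]
  have "g5 + g6 + g8 + g9 \<le> min k g" "g4 + g5 + g6 + g7 + g8 + g9 \<le> min k g"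
    "g4 + g5 + g7 + g8 \<le> min k g" "g2 + g3 + g5 + g6 + g8 + g9 \<le> min k g"
    "g1 + g2 + g4 + g5 + g7 + g8 \<le> min k g" "g2 + g3 + g5 + g6 \<le> min k g"
    "g1 + g2 + g3 + g4 + g5 + g6 \<le> min k g" "g1 + g2 + g4 + g5 \<le> min k g"
    using hq r1 r2 r3 c1 c2 c3 unfolding g_def by linarith+
  from grid[OF this[THEN of_nat_mono, unfolded of_nat_add]] show ?thesis
    by (simp add: Let_def g_def)
qed

end
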